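(* Let $\alpha>1$, $r>0$, and let $f:(0,r)\to(0,\infty)$ be a monotonically nondecreasing function such that $f(x)\simeq x^\alpha$ as $x\to0$ and $f(x)<x$ for all $x\in(0,r)$. For $x_1\in(0,r)$ define the sequence $(x_n)_{n\ge1}$ by $x_{n+1}=x_n-f(x_n)$, and let $S(x_1)=\{x_n:n\ge1\}\subset\mathbb{R}$. Then $x_n\simeq n^{-1/(\alpha-1)}$ as $n\to\infty$, $\dim_B S(x_1)=1-\frac1\alpha$, and $S(x_1)$ is Minkowski nondegenerate.
   Context: For sequences of positive reals, $a_n\simeq b_n$ as $n\to\infty$ means there exist constants $0<A\le B$ with $A\le a_n/b_n\le B$ for all $n$. For positive functions, $f(x)\simeq g(x)$ as $x\to0$ means there exist constants $0<A\le B$ with $f(x)/g(x)\in[A,B]$ for all sufficiently small $x>0$. For a bounded set $S\subset\mathbb{R}$ and $\varepsilon>0$, $S_\varepsilon=\{y\in\mathbb{R}: \mathrm{dist}(y,S)<\varepsilon\}$ and $|S_\varepsilon|$ denotes its Lebesgue measure. For $s\ge0$, the upper and lower $s$-dimensional Minkowski contents are $\mathcal M^{*s}(S)=\limsup_{\varepsilon\to0}|S_\varepsilon|/\varepsilon^{1-s}$ and $\mathcal M_*^{s}(S)=\liminf_{\varepsilon\to0}|S_\varepsilon|/\varepsilon^{1-s}$. The upper box dimension is $\overline{\dim}_BS=\inf\{s\ge0:\mathcal M^{*s}(S)=0\}$, the lower box dimension $\underline{\dim}_BS=\inf\{s\ge0:\mathcal M_*^{s}(S)=0\}$; if they coincide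 the common value is $\dim_BS$. $S$ is Minkowski nondegenerate if there is $d\ge0$ with $0<\mathcal M_*^d(S)\le\mathcal M^{*d}(S)<\infty$. A sequence is identified with the set of its terms. *)

theory Defs
  imports "HOL-Analysis.Analysis"
begin

definition simeq_at0 :: "(real \<Rightarrow> real) \<Rightarrow> (real \<Rightarrow> real) \<Rightarrow> bool" where
  "simeq_at0 f g \<longleftrightarrow> (\<exists>A B. 0 < A \<and> A \<le> B \<and>
      (\<forall>\<^sub>F x in at_right 0. A \<le> f x / g x \<and> f x / g x \<le> B))"

definition simeq_seq :: "(nat \<Rightarrow> real) \<Rightarrow> (nat \<Rightarrow> real) \<Rightarrow> bool" where
  "simeq_seq a b \<longleftrightarrow> (\<exists>A B. 0 < A \<and> A \<le> B \<and>
      (\<forall>n\<ge>1. A \<le> a n / b n \<and> a n / b n \<le> B))"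

definition nbhd :: "real set \<Rightarrow> real \<Rightarrow> real set" where
  "nbhd S \<epsilon> = {y. infdist y S < \<epsilon>}"

definition upper_mink :: "real \<Rightarrow> real set \<Rightarrow> ereal" where
  "upper_mink s S = Limsup (at_right 0)
     (\<lambda>\<epsilon>. ereal (measure lebesgue (nbhd S \<epsilon>) / \<epsilon> powr (1 - s)))"

definition lower_mink :: "real \<Rightarrow> real set \<Rightarrow> ereal" where
  "lower_mink s S = Liminf (at_right 0)
     (\<lambda>\<epsilon>. ereal (measure lebesgue (nbhd S \<epsilon>) / \<epsilon> powr (1 - s)))"

definition upper_box_dim :: "real set \<Rightarrow> real" where
  "upper_box_dim S = Inf {s. 0 \<le> s \<and> upper_mink s S = 0}"

definition lower_box_dim :: "real set \<Rightarrow> real" where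
  "lower_box_dim S = Inf {s. 0 \<le> s \<and> lower_mink s S = 0}"

definition has_box_dim :: "real set \<Rightarrow> real \<Rightarrow> bool" where
  "has_box_dim S d \<longleftrightarrow> upper_box_dim S = d \<and> lower_box_dim S = d"

definition mink_nondegenerate :: "real set \<Rightarrow> bool" where
  "mink_nondegenerate S \<longleftrightarrow> (\<exists>d\<ge>0. 0 < lower_mink d S \<and>
      lower_mink d S \<le> upper_mink d S \<and> upper_mink d S < \<infinity>)"

end

theory Submission
  imports Defs "HOL-Real_Asymp.Real_Asymp"
begin

text \<open>
  Proof structure.  (1) Two-sided bounds \<open>c\<^sub>1 \<epsilon>\<^bsup>1-D\<^esup> \<le> |S\<^sub>\<epsilon>| \<le> c\<^sub>2 \<epsilon>\<^bsup>1-D\<^esup>\<close> for small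
  \<open>\<epsilon>\<close> imply, for any set \<open>S\<close>, that \<open>dim\<^sub>B S = D\<close> and that \<open>S\<close> is nondegenerate.
  (2) For a positive decreasing null sequence, \<open>|S\<^sub>\<epsilon>| \<le> x\<^sub>M + 2\<epsilon>M\<close> for every \<open>M\<close>, and
  \<open>|S\<^sub>\<epsilon>| \<ge> x\<^sub>M\<close> once all gaps beyond \<open>M\<close> are below \<open>2\<epsilon>\<close>.  (3) For the iteration, the
  mean value theorem shows that \<open>x\<^sub>n\<^bsup>1-\<alpha>\<^esup>\<close> eventually has increments between positive
  constants, hence grows linearly; this gives \<open>x\<^sub>n \<simeq> n\<^bsup>-1/(\<alpha>-1)\<^esup>\<close>.  (4) Choosing \<open>M\<close>
  with \<open>x\<^sub>M \<simeq> \<epsilon>\<^bsup>1/\<alpha>\<^esup>\<close> in (2) yields \<open>|S\<^sub>\<epsilon>| \<simeq> \<epsilon>\<^bsup>1/\<alpha>\<^esup>\<close>, and (1) with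
  \<open>D = 1 - 1/\<alpha>\<close> concludes.
\<close>

definition mink_ratio :: "real \<Rightarrow> real set \<Rightarrow> real \<Rightarrow> real" where
  "mink_ratio s S \<epsilon> = measure lebesgue (nbhd S \<epsilon>) / \<epsilon> powr (1 - s)"

lemma upper_mink_ratio:
  "upper_mink s S = Limsup (at_right 0) (\<lambda>\<epsilon>. ereal (mink_ratio s S \<epsilon>))"
  unfolding upper_mink_def mink_ratio_def ..

lemma lower_mink_ratio:
  "lower_mink s S = Liminf (at_right 0) (\<lambda>\<epsilon>. ereal (mink_ratio s S \<epsilon>))"
  unfolding lower_mink_def mink_ratio_def ..

lemma lower_mink_le_upper_mink: "lower_mink s S \<le> upper_mink s S"
  unfolding lower_mink_ratio upper_mink_ratio by (rule Liminf_le_Limsup) simp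

lemma eventually_small: "\<forall>\<^sub>F \<epsilon> in at_right 0. 0 < \<epsilon> \<and> \<epsilon> < (1::real)"
  unfolding eventually_at_right_field by (intro exI[of _ 1]) auto

lemma lower_mink_ge:
  assumes "s \<le> D"
    and lb: "\<forall>\<^sub>F \<epsilon> in at_right 0. c * \<epsilon> powr (1 - D) \<le> measure lebesgue (nbhd S \<epsilon>)"
    and "0 < c"
  shows "ereal c \<le> lower_mink s S"
  unfolding lower_mink_ratio
proof (rule Liminf_bounded)
  show "\<forall>\<^sub>F \<epsilon> in at_right 0. ereal c \<le> ereal (mink_ratio s S \<epsilon>)"
    using lb eventually_small
  proof eventually_elim
    case (elim \<epsilon>)
    have "c * \<epsilon> powr (1 - s) \<le> c * \<epsilon> powr (1 - D)"
      using elim \<open>s \<le> D\<close> \<open>0 < c\<close> by (intro mult_left_mono powr_mono') auto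
    also have "\<dots> \<le> measure lebesgue (nbhd S \<epsilon>)"
      using elim by simp
    finally show ?case
      using elim by (simp add: mink_ratio_def pos_le_divide_eq)
  qed
qed

lemma mink_ratio_le:
  assumes ub: "\<forall>\<^sub>F \<epsilon> in at_right 0. measure lebesgue (nbhd S \<epsilon>) \<le> c * \<epsilon> powr (1 - D)"
  shows "\<forall>\<^sub>F \<epsilon> in at_right 0. mink_ratio s S \<epsilon> \<le> c * \<epsilon> powr (s - D)"
  using ub eventually_small
proof eventually_elim
  case (elim \<epsilon>)
  have "\<epsilon> powr (1 - D) = \<epsilon> powr (s - D) * \<epsilon> powr (1 - s)"
    using elim by (simp add: powr_add[symmetric])
  then show ?case
    using elim by (simp add: mink_ratio_def pos_divide_le_eq mult.assoc)
qed

lemma upper_mink_le: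
  assumes "\<forall>\<^sub>F \<epsilon> in at_right 0. measure lebesgue (nbhd S \<epsilon>) \<le> c * \<epsilon> powr (1 - D)"
  shows "upper_mink D S \<le> ereal c"
  unfolding upper_mink_ratio
proof (rule Limsup_bounded)
  show "\<forall>\<^sub>F \<epsilon> in at_right 0. ereal (mink_ratio D S \<epsilon>) \<le> ereal c"
    using mink_ratio_le[OF assms, of D] eventually_small by eventually_elim simp
qed

lemma mink_vanish:
  assumes "D < s"
    and ub: "\<forall>\<^sub>F \<epsilon> in at_right 0. measure lebesgue (nbhd S \<epsilon>) \<le> c * \<epsilon> powr (1 - D)"
  shows "lower_mink s S = 0" and "upper_mink s S = 0"
proof -
  have nonneg: "\<forall>\<^sub>F \<epsilon> in at_right 0. 0 \<le> mink_ratio s S \<epsilon>"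
    using eventually_small by eventually_elim (simp add: mink_ratio_def)
  have "((\<lambda>\<epsilon>. c * \<epsilon> powr (s - D)) \<longlongrightarrow> 0) (at_right 0)"
    using \<open>D < s\<close> by real_asymp
  then have "((\<lambda>\<epsilon>. mink_ratio s S \<epsilon>) \<longlongrightarrow> 0) (at_right 0)"
    by (rule tendsto_sandwich[OF nonneg mink_ratio_le[OF ub] tendsto_const])
  then have lim: "((\<lambda>\<epsilon>. ereal (mink_ratio s S \<epsilon>)) \<longlongrightarrow> 0) (at_right 0)"
    using tendsto_ereal by (fastforce simp: zero_ereal_def)
  show "lower_mink s S = 0"
    unfolding lower_mink_ratio using lim by (intro lim_imp_Liminf) auto
  show "upper_mink s S = 0"
    unfolding upper_mink_ratio using lim by (intro lim_imp_Limsup) auto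
qed

lemma box_dim_of_power_bounds:
  assumes "0 \<le> D" and "0 < c1"
    and lb: "\<forall>\<^sub>F \<epsilon> in at_right 0. c1 * \<epsilon> powr (1 - D) \<le> measure lebesgue (nbhd S \<epsilon>)"
    and ub: "\<forall>\<^sub>F \<epsilon> in at_right 0. measure lebesgue (nbhd S \<epsilon>) \<le> c2 * \<epsilon> powr (1 - D)"
  shows "has_box_dim S D \<and> mink_nondegenerate S"
proof -
  have lower_pos: "0 < lower_mink s S" if "s \<le> D" for s
    using lower_mink_ge[OF that lb \<open>0 < c1\<close>] \<open>0 < c1\<close> by (metis less_le_trans ereal_less(2))
  have "upper_mink s S = 0 \<longleftrightarrow> D < s" for s
    using lower_pos[of s] lower_mink_le_upper_mink[of s S] mink_vanish(2)[OF _ ub, of s]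
    by (cases "D < s") auto
  moreover have "lower_mink s S = 0 \<longleftrightarrow> D < s" for s
    using lower_pos[of s] mink_vanish(1)[OF _ ub, of s] by (cases "D < s") auto
  ultimately have "{s. 0 \<le> s \<and> upper_mink s S = 0} = {D<..}"
    and "{s. 0 \<le> s \<and> lower_mink s S = 0} = {D<..}"
    using \<open>0 \<le> D\<close> by auto
  then have "has_box_dim S D"
    unfolding has_box_dim_def upper_box_dim_def lower_box_dim_def by simp
  moreover have "upper_mink D S < \<infinity>"
    using upper_mink_le[OF ub] by (rule le_less_trans) simp
  ultimately show ?thesis
    unfolding mink_nondegenerate_def
    using \<open>0 \<le> D\<close> lower_pos[of D] lower_mink_le_upper_mink[of D S] by blast
qed

lemma nbhd_iff:
  assumes "S \<noteq> {}"
  shows "y \<in> nbhd S \<epsilon> \<longleftrightarrow> (\<exists>a\<in>S. dist y a < \<epsilon>)"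
proof
  assume "y \<in> nbhd S \<epsilon>"
  then have "(INF a\<in>S. dist y a) < \<epsilon>"
    unfolding nbhd_def using infdist_notempty[OF assms] by simp
  then show "\<exists>a\<in>S. dist y a < \<epsilon>"
    using assms by (simp add: cInf_less_iff bdd_below_image_dist)
next
  assume "\<exists>a\<in>S. dist y a < \<epsilon>"
  then show "y \<in> nbhd S \<epsilon>"
    unfolding nbhd_def by (auto intro: le_less_trans[OF infdist_le])
qed

lemma nbhd_open: "open (nbhd S \<epsilon>)"
  unfolding nbhd_def
  by (intro open_Collect_less continuous_on_infdist continuous_on_id continuous_on_const)

lemma bounds_from_eventual_bounds:
  fixes g :: "nat \<Rightarrow> real"
  assumes pos: "\<And>n. n \<ge> 1 \<Longrightarrow> g n > 0" and "L > 0"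
    and ev: "\<And>n. n \<ge> N \<Longrightarrow> L \<le> g n \<and> g n \<le> U"
  shows "\<exists>L' U'. 0 < L' \<and> L' \<le> U' \<and> (\<forall>n\<ge>1. L' \<le> g n \<and> g n \<le> U')"
proof -
  define I where "I = g ` {1..N}"
  define L' where "L' = min L (Min (insert L I))"
  define U' where "U' = max U (Max (insert U I))"
  have fin: "finite I" unfolding I_def by simp
  have bounds: "L' \<le> g n \<and> g n \<le> U'" if "n \<ge> 1" for n
  proof (cases "n \<le> N")
    case True
    then have "g n \<in> I" using that unfolding I_def by auto
    then show ?thesis unfolding L'_def U'_def using fin by auto
  next
    case False
    then show ?thesis using ev[of n] unfolding L'_def U'_def by auto
  qed
  have "0 < Min (insert L I)"
    using fin \<open>L > 0\<close> pos unfolding I_def by auto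
  then have "L' > 0" using \<open>L > 0\<close> unfolding L'_def by auto
  moreover have "L' \<le> U'" using bounds[of 1] by linarith
  ultimately show ?thesis using bounds by blast
qed

lemma linear_growth_of_bounded_increments:
  fixes y :: "nat \<Rightarrow> real"
  assumes pos: "\<And>n. n \<ge> 1 \<Longrightarrow> y n > 0" and "N \<ge> 1" and "0 < c1"
    and incr: "\<And>n. n \<ge> N \<Longrightarrow> c1 \<le> y (Suc n) - y n \<and> y (Suc n) - y n \<le> c2"
  shows "\<exists>L U. 0 < L \<and> L \<le> U \<and> (\<forall>n\<ge>1. L \<le> y n / real n \<and> y n / real n \<le> U)"
proof -
  have linear: "y N + c1 * (real n - real N) \<le> y n \<and> y n \<le> y N + c2 * (real n - real N)"
    if "n \<ge> N" for n
    using that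
  proof (induction n rule: dec_induct)
    case (step n)
    then show ?case using incr[of n] by (simp add: algebra_simps)
  qed simp
  have "c1 \<le> c2" using incr[of N] by simp
  have "y N > 0" using pos \<open>N \<ge> 1\<close> by simp
  have eventual: "c1 / 2 \<le> y n / real n \<and> y n / real n \<le> y N + c2" if "n \<ge> 2 * N" for n
  proof -
    have n: "real n \<ge> 1" "n \<ge> N" "real n - real N \<ge> real n / 2"
      using that \<open>N \<ge> 1\<close> by auto
    have "c1 / 2 * real n \<le> c1 * (real n - real N)"
      using n \<open>0 < c1\<close> by (simp add: mult_left_mono)
    also have "\<dots> \<le> y n" using linear[OF n(2)] \<open>y N > 0\<close> by linarith
    finally have lower: "c1 / 2 \<le> y n / real n"
      using n(1) by (simp add: pos_le_divide_eq)
    have "c2 * (real n - real N) \<le> c2 * real n"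
      using \<open>0 < c1\<close> \<open>c1 \<le> c2\<close> by (simp add: mult_left_mono)
    then have "y n \<le> y N + c2 * real n" using linear[OF n(2)] by linarith
    also have "\<dots> \<le> (y N + c2) * real n"
      using \<open>y N > 0\<close> n(1) by (simp add: distrib_right)
    finally have "y n / real n \<le> y N + c2"
      using n(1) by (simp add: pos_divide_le_eq)
    with lower show ?thesis by simp
  qed
  show ?thesis
    using bounds_from_eventual_bounds[of "\<lambda>n. y n / real n", OF _ _ eventual] pos \<open>0 < c1\<close>
    by simp
qed

lemma powr_neg_diff_bounds:
  fixes a b \<beta> :: real
  assumes "0 < a" "a < b" "0 < \<beta>"
  shows "\<beta> * (b - a) * b powr (-\<beta> - 1) \<le> a powr (-\<beta>) - b powr (-\<beta>)
       \<and> a powr (-\<beta>) - b powr (-\<beta>) \<le> \<beta> * (b - a) * a powr (-\<beta> - 1)"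
proof -
  have deriv: "((\<lambda>t. t powr (-\<beta>)) has_real_derivative (-\<beta>) * t powr (-\<beta> - 1)) (at t)"
    if "a \<le> t" "t \<le> b" for t
    using has_real_derivative_powr[of t "-\<beta>"] that \<open>0 < a\<close> by auto
  obtain z where z: "a < z" "z < b"
    and mvt: "b powr (-\<beta>) - a powr (-\<beta>) = (b - a) * ((-\<beta>) * z powr (-\<beta> - 1))"
    using MVT2[OF \<open>a < b\<close> deriv] by blast
  have diff: "a powr (-\<beta>) - b powr (-\<beta>) = \<beta> * (b - a) * z powr (-\<beta> - 1)"
    using mvt by (simp add: algebra_simps)
  have "0 \<le> \<beta> * (b - a)" using \<open>a < b\<close> \<open>0 < \<beta>\<close> by simp
  moreover have "b powr (-\<beta> - 1) \<le> z powr (-\<beta> - 1)" "z powr (-\<beta> - 1) \<le> a powr (-\<beta> - 1)"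
    using z \<open>0 < a\<close> \<open>0 < \<beta>\<close> by (auto intro!: powr_mono2')
  ultimately show ?thesis
    unfolding diff by (simp add: mult_left_mono)
qed

lemma simeq_at0_powr_bounds:
  assumes "simeq_at0 f (\<lambda>t. t powr \<alpha>)"
  obtains A B \<delta> where "0 < A" "A \<le> B" "0 < \<delta>"
    and "\<And>t. 0 < t \<Longrightarrow> t < \<delta> \<Longrightarrow> A * t powr \<alpha> \<le> f t \<and> f t \<le> B * t powr \<alpha>"
proof -
  obtain A B where AB: "0 < A" "A \<le> B"
    and ev: "\<forall>\<^sub>F t in at_right 0. A \<le> f t / t powr \<alpha> \<and> f t / t powr \<alpha> \<le> B"
    using assms unfolding simeq_at0_def by auto
  then obtain \<delta> where "\<delta> > 0"
    and \<delta>: "\<And>t. 0 < t \<Longrightarrow> t < \<delta> \<Longrightarrow> A \<le> f t / t powr \<alpha> \<and> f t / t powr \<alpha> \<le> B"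
    unfolding eventually_at_right_field by auto
  show ?thesis
  proof (rule that[OF AB \<open>\<delta> > 0\<close>])
    fix t :: real assume "0 < t" "t < \<delta>"
    then show "A * t powr \<alpha> \<le> f t \<and> f t \<le> B * t powr \<alpha>"
      using \<delta>[of t] by (simp add: pos_le_divide_eq pos_divide_le_eq)
  qed
qed

lemma antitone_from_steps:
  fixes x :: "nat \<Rightarrow> real"
  assumes "\<And>n. n \<ge> 1 \<Longrightarrow> x (Suc n) \<le> x n" and "1 \<le> m" "m \<le> n"
  shows "x n \<le> x m"
  using \<open>m \<le> n\<close>
proof (induction n rule: dec_induct)
  case (step n)
  then show ?case using assms(1)[of n] \<open>1 \<le> m\<close> by simp
qed simp

locale decreasing_null_seq =
  fixes x :: "nat \<Rightarrow> real"
  assumes pos: "\<And>n. n \<ge> 1 \<Longrightarrow> 0 < x n"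
    and step_le: "\<And>n. n \<ge> 1 \<Longrightarrow> x (Suc n) \<le> x n"
    and tendsto_zero: "x \<longlonglongrightarrow> 0"
begin

lemma antimono: "1 \<le> m \<Longrightarrow> m \<le> n \<Longrightarrow> x n \<le> x m"
  using antitone_from_steps[of x m n] step_le by blast

lemma nbhd_range_iff: "y \<in> nbhd (x ` {1..}) \<epsilon> \<longleftrightarrow> (\<exists>n\<ge>1. dist y (x n) < \<epsilon>)"
  by (subst nbhd_iff) auto

lemma nbhd_range_subset: "nbhd (x ` {1..}) \<epsilon> \<subseteq> {-\<epsilon><..<x 1 + \<epsilon>}"
proof
  fix y assume "y \<in> nbhd (x ` {1..}) \<epsilon>"
  then obtain n where "n \<ge> 1" "dist y (x n) < \<epsilon>" unfolding nbhd_range_iff by blast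
  then show "y \<in> {-\<epsilon><..<x 1 + \<epsilon>}"
    using pos[of n] antimono[of 1 n] by (auto simp: dist_real_def)
qed

lemma nbhd_range_lmeasurable: "nbhd (x ` {1..}) \<epsilon> \<in> lmeasurable"
proof (rule bounded_set_imp_lmeasurable)
  show "bounded (nbhd (x ` {1..}) \<epsilon>)"
    by (rule bounded_subset[OF _ nbhd_range_subset]) simp
qed (simp add: nbhd_open)

text \<open>Upper bound: the terms from \<open>M\<close> on lie in \<open>(0, x M]\<close>, and each of the first
  \<open>M - 1\<close> terms contributes an interval of length \<open>2\<epsilon>\<close>.\<close>
lemma measure_nbhd_range_le:
  assumes "M \<ge> 1" "0 < \<epsilon>"
  shows "measure lebesgue (nbhd (x ` {1..}) \<epsilon>) \<le> x M + 2 * \<epsilon> * real M"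
proof -
  define I where "I = (\<Union>n\<in>{1..<M}. {x n - \<epsilon><..<x n + \<epsilon>})"
  define T where "T = {-\<epsilon><..<x M + \<epsilon>} \<union> I"
  have cover: "nbhd (x ` {1..}) \<epsilon> \<subseteq> T"
  proof
    fix y assume "y \<in> nbhd (x ` {1..}) \<epsilon>"
    then obtain n where n: "n \<ge> 1" "\<bar>y - x n\<bar> < \<epsilon>"
      unfolding nbhd_range_iff dist_real_def by blast
    show "y \<in> T"
    proof (cases "n < M")
      case True
      then have "y \<in> I" using n unfolding I_def by (auto simp: abs_less_iff intro!: bexI[of _ n])
      then show ?thesis unfolding T_def by blast
    next
      case False
      then show ?thesis using n pos[of n] antimono[of M n] \<open>M \<ge> 1\<close>
        unfolding T_def by (auto simp: abs_less_iff)
    qed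
  qed
  have "T \<subseteq> {-\<epsilon><..<x 1 + \<epsilon>}"
    using pos antimono[of 1] \<open>M \<ge> 1\<close> unfolding T_def I_def by fastforce
  then have "bounded T"
    by (rule bounded_subset[rotated]) simp
  then have "T \<in> lmeasurable"
    unfolding T_def I_def by (intro bounded_set_imp_lmeasurable) auto
  then have "measure lebesgue (nbhd (x ` {1..}) \<epsilon>) \<le> measure lebesgue T"
    using cover nbhd_open by (intro measure_mono_fmeasurable) auto
  also have "\<dots> \<le> measure lebesgue {-\<epsilon><..<x M + \<epsilon>} + measure lebesgue I"
    unfolding T_def I_def by (rule measure_Un_le) auto
  also have "\<dots> \<le> (x M + 2 * \<epsilon>) + (\<Sum>n\<in>{1..<M}. measure lebesgue {x n - \<epsilon><..<x n + \<epsilon>})"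
    unfolding I_def using pos[of M] assms by (intro add_mono measure_UNION_le) auto
  also have "\<dots> = x M + 2 * \<epsilon> * real M"
    using assms by (simp add: of_nat_diff algebra_simps)
  finally show ?thesis .
qed

text \<open>Lower bound: if all gaps from \<open>M\<close> on are smaller than \<open>2\<epsilon>\<close>, every point of
  \<open>(0, x M)\<close> lies between two consecutive terms and hence within \<open>\<epsilon>\<close> of one of them.\<close>
lemma interval_subset_nbhd_range:
  assumes "M \<ge> 1" and gaps: "\<And>n. n \<ge> M \<Longrightarrow> x n - x (Suc n) < 2 * \<epsilon>"
  shows "{0<..<x M} \<subseteq> nbhd (x ` {1..}) \<epsilon>"
proof
  fix y assume y: "y \<in> {0<..<x M}"
  obtain N where N: "\<And>n. n \<ge> N \<Longrightarrow> x n < y"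
    using order_tendstoD(2)[OF tendsto_zero, of y] y by (auto simp: eventually_sequentially)
  have ex: "\<exists>k. M \<le> k \<and> x k < y"
    using N[of "max M N"] by (intro exI[of _ "max M N"]) auto
  define k where "k = (LEAST k. M \<le> k \<and> x k < y)"
  have k: "M \<le> k" "x k < y"
    using LeastI_ex[OF ex] unfolding k_def by auto
  then obtain n where n: "k = Suc n" "M \<le> n"
    using y by (cases k) (auto simp: le_Suc_eq)
  have "\<not> (M \<le> n \<and> x n < y)"
    using not_less_Least[of n "\<lambda>k. M \<le> k \<and> x k < y"] n unfolding k_def by auto
  then have "x (Suc n) < y" "y \<le> x n" using k n by auto
  show "y \<in> nbhd (x ` {1..}) \<epsilon>"
  proof (cases "x n - y < \<epsilon>")
    case True
    then have "dist y (x n) < \<epsilon>" using \<open>y \<le> x n\<close> by (simp add: dist_real_def)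
    moreover have "n \<ge> 1" using n \<open>M \<ge> 1\<close> by simp
    ultimately show ?thesis unfolding nbhd_range_iff by blast
  next
    case False
    then have "dist y (x (Suc n)) < \<epsilon>"
      using gaps[OF n(2)] \<open>x (Suc n) < y\<close> by (simp add: dist_real_def)
    then show ?thesis unfolding nbhd_range_iff by (intro exI[of _ "Suc n"]) simp
  qed
qed

lemma measure_nbhd_range_ge:
  assumes "M \<ge> 1" and "\<And>n. n \<ge> M \<Longrightarrow> x n - x (Suc n) < 2 * \<epsilon>"
  shows "x M \<le> measure lebesgue (nbhd (x ` {1..}) \<epsilon>)"
proof -
  have "measure lebesgue {0<..<x M} \<le> measure lebesgue (nbhd (x ` {1..}) \<epsilon>)"
    using interval_subset_nbhd_range[OF assms] nbhd_range_lmeasurable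
    by (intro measure_mono_fmeasurable) auto
  then show ?thesis using pos[OF \<open>M \<ge> 1\<close>] by simp
qed

end

locale iteration =
  fixes \<alpha> r :: real and f :: "real \<Rightarrow> real" and x :: "nat \<Rightarrow> real"
  assumes alpha_gt_1: "\<alpha> > 1"
    and f_mono: "mono_on {0<..<r} f"
    and f_pos: "\<And>t. t \<in> {0<..<r} \<Longrightarrow> f t > 0"
    and f_simeq: "simeq_at0 f (\<lambda>t. t powr \<alpha>)"
    and f_less: "\<And>t. t \<in> {0<..<r} \<Longrightarrow> f t < t"
    and x_1: "x 1 \<in> {0<..<r}"
    and x_step: "\<And>n. n \<ge> 1 \<Longrightarrow> x (Suc n) = x n - f (x n)"
begin

lemma x_in: "n \<ge> 1 \<Longrightarrow> 0 < x n \<and> x n < r"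
proof (induction n rule: nat_induct_at_least)
  case base
  then show ?case using x_1 by simp
next
  case (Suc n)
  then show ?case using x_step[of n] f_pos[of "x n"] f_less[of "x n"] by auto
qed

lemma x_decr: "n \<ge> 1 \<Longrightarrow> x (Suc n) < x n"
  using x_step[of n] f_pos[of "x n"] x_in[of n] by auto

text \<open>The iterates drop below every \<open>c > 0\<close>: as long as \<open>x\<^sub>n \<ge> c\<close>, monotonicity of \<open>f\<close>
  makes every step at least \<open>f(c) > 0\<close>.\<close>
lemma x_eventually_below:
  assumes "0 < c"
  shows "\<exists>n\<ge>1. x n < c"
proof (rule ccontr)
  assume "\<not> ?thesis"
  then have above: "c \<le> x n" if "n \<ge> 1" for n
    using that by (simp add: not_less)
  have "c < r" using above[of 1] x_in[of 1] by simp
  then have "f c > 0" using f_pos \<open>0 < c\<close> by simp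
  have linear: "x n \<le> x 1 - (real n - 1) * f c" if "n \<ge> 1" for n
    using that
  proof (induction n rule: nat_induct_at_least)
    case (Suc n)
    have "f c \<le> f (x n)"
      using mono_onD[OF f_mono, of c "x n"] above[of n] x_in[of n] Suc \<open>0 < c\<close> \<open>c < r\<close> by auto
    then show ?case using x_step[of n] Suc by (simp add: algebra_simps)
  qed simp
  define n where "n = nat \<lceil>x 1 / f c\<rceil> + 1"
  have "real n - 1 \<ge> x 1 / f c" unfolding n_def by linarith
  then have "(real n - 1) * f c \<ge> x 1" using \<open>f c > 0\<close> by (simp add: field_simps)
  then show False using linear[of n] x_in[of n] unfolding n_def by auto
qed

lemma x_tendsto_zero: "x \<longlonglongrightarrow> 0"
proof (rule order_tendstoI)
  fix a :: real assume "a < 0"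
  then show "\<forall>\<^sub>F n in sequentially. a < x n"
    unfolding eventually_sequentially using x_in by (intro exI[of _ 1]) (auto intro: less_trans)
next
  fix a :: real assume "0 < a"
  then obtain N where "N \<ge> 1" "x N < a" using x_eventually_below by blast
  moreover have "x n \<le> x N" if "n \<ge> N" for n
    using antitone_from_steps[of x N n] x_decr \<open>N \<ge> 1\<close> that by (meson less_imp_le)
  ultimately show "\<forall>\<^sub>F n in sequentially. x n < a"
    unfolding eventually_sequentially by (meson le_less_trans)
qed

sublocale decreasing_null_seq x
  using x_in x_decr x_tendsto_zero by unfold_locales (auto simp: less_imp_le)

lemma gap_le:
  assumes "M \<ge> 1" "M \<le> n"
  shows "x n - x (Suc n) \<le> f (x M)"
proof -
  have "f (x n) \<le> f (x M)"
    using mono_onD[OF f_mono] x_in[of n] x_in[of M] antimono[OF assms] assms by simp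
  then show ?thesis using x_step[of n] assms by simp
qed

text \<open>Once \<open>x\<^sub>n\<close> is small, the increments of \<open>x\<^sub>n\<^bsup>1-\<alpha>\<^esup>\<close> lie between positive constants:
  mean value theorem for \<open>t \<mapsto> t\<^bsup>1-\<alpha>\<^esup>\<close> together with \<open>f(t) \<simeq> t\<^sup>\<alpha>\<close>.\<close>
lemma increment_bounds:
  assumes "0 < A"
    and fb: "\<And>t. 0 < t \<Longrightarrow> t < \<delta> \<Longrightarrow> A * t powr \<alpha> \<le> f t \<and> f t \<le> B * t powr \<alpha>"
    and "n \<ge> 1" "x n < \<delta>" and small: "2 * B * x n powr (\<alpha> - 1) \<le> 1"
  shows "(\<alpha> - 1) * A \<le> x (Suc n) powr (1 - \<alpha>) - x n powr (1 - \<alpha>)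
       \<and> x (Suc n) powr (1 - \<alpha>) - x n powr (1 - \<alpha>) \<le> (\<alpha> - 1) * (2 powr \<alpha> * B)"
proof -
  define b a where "b = x n" and "a = x (Suc n)"
  have "0 < b" "b - a = f b" "0 < f b"
    using x_in[of n] x_step[of n] f_pos[of b] \<open>n \<ge> 1\<close> unfolding a_def b_def by auto
  have fb_b: "A * b powr \<alpha> \<le> f b" "f b \<le> B * b powr \<alpha>"
    using fb[of b] \<open>0 < b\<close> \<open>x n < \<delta>\<close> unfolding b_def by auto
  have "B * b powr \<alpha> = (B * b powr (\<alpha> - 1)) * b"
    using \<open>0 < b\<close> by (simp add: powr_diff)
  also have "\<dots> \<le> 1 / 2 * b"
    using small \<open>0 < b\<close> unfolding b_def by (intro mult_right_mono) auto
  finally have a: "b / 2 \<le> a" "a < b" "0 < a"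
    using fb_b(2) \<open>b - a = f b\<close> \<open>0 < f b\<close> \<open>0 < b\<close> by auto
  have mvt: "(\<alpha> - 1) * (b - a) * b powr (-\<alpha>) \<le> a powr (1 - \<alpha>) - b powr (1 - \<alpha>)"
    "a powr (1 - \<alpha>) - b powr (1 - \<alpha>) \<le> (\<alpha> - 1) * (b - a) * a powr (-\<alpha>)"
    using powr_neg_diff_bounds[of a b "\<alpha> - 1"] a alpha_gt_1 by simp_all
  have "(\<alpha> - 1) * A = (\<alpha> - 1) * ((A * b powr \<alpha>) * b powr (-\<alpha>))"
    using \<open>0 < b\<close> by (simp add: powr_minus)
  also have "\<dots> \<le> (\<alpha> - 1) * (f b * b powr (-\<alpha>))"
    using fb_b(1) alpha_gt_1 by (intro mult_left_mono mult_right_mono) auto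
  finally have lower: "(\<alpha> - 1) * A \<le> a powr (1 - \<alpha>) - b powr (1 - \<alpha>)"
    using mvt(1) \<open>b - a = f b\<close> by (simp add: mult.assoc)
  have "a powr (-\<alpha>) \<le> (b / 2) powr (-\<alpha>)"
    using a \<open>0 < b\<close> alpha_gt_1 by (intro powr_mono2') auto
  also have "\<dots> = 2 powr \<alpha> * b powr (-\<alpha>)"
    using \<open>0 < b\<close> by (simp add: powr_divide powr_minus divide_simps)
  finally have "(\<alpha> - 1) * (f b * a powr (-\<alpha>)) \<le> (\<alpha> - 1) * ((B * b powr \<alpha>) * (2 powr \<alpha> * b powr (-\<alpha>)))"
    using fb_b(2) \<open>0 < f b\<close> alpha_gt_1 by (intro mult_left_mono mult_mono) auto
  also have "\<dots> = (\<alpha> - 1) * (2 powr \<alpha> * B)"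
    using \<open>0 < b\<close> by (simp add: powr_minus)
  finally have upper: "a powr (1 - \<alpha>) - b powr (1 - \<alpha>) \<le> (\<alpha> - 1) * (2 powr \<alpha> * B)"
    using mvt(2) \<open>b - a = f b\<close> by (simp add: mult.assoc)
  show ?thesis using lower upper unfolding a_def b_def by simp
qed

text \<open>The main estimate \<open>x\<^sub>n \<simeq> n\<^bsup>-1/(\<alpha>-1)\<^esup>\<close>, in multiplicative form: \<open>x\<^sub>n\<^bsup>1-\<alpha>\<^esup>\<close> grows
  linearly by the previous lemma.\<close>
lemma x_asymptotics:
  obtains a0 b0 where "0 < a0" "a0 \<le> b0"
    and "\<And>n. n \<ge> 1 \<Longrightarrow> a0 * real n powr (-1 / (\<alpha> - 1)) \<le> x n
                          \<and> x n \<le> b0 * real n powr (-1 / (\<alpha> - 1))"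
proof -
  obtain A B \<delta> where AB: "0 < A" "A \<le> B" "0 < \<delta>"
    and fb: "\<And>t. 0 < t \<Longrightarrow> t < \<delta> \<Longrightarrow> A * t powr \<alpha> \<le> f t \<and> f t \<le> B * t powr \<alpha>"
    using simeq_at0_powr_bounds[OF f_simeq] by blast
  define \<eta> where "\<eta> = min \<delta> ((1 / (2 * B)) powr (1 / (\<alpha> - 1)))"
  have "0 < \<eta>" unfolding \<eta>_def using AB by simp
  then obtain N where N: "\<And>n. n \<ge> N \<Longrightarrow> x n < \<eta>"
    using order_tendstoD(2)[OF tendsto_zero] by (auto simp: eventually_sequentially)
  define y where "y n = x n powr (1 - \<alpha>)" for n
  have incr: "(\<alpha> - 1) * A \<le> y (Suc n) - y n \<and> y (Suc n) - y n \<le> (\<alpha> - 1) * (2 powr \<alpha> * B)"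
    if "n \<ge> Suc N" for n
  proof -
    have "n \<ge> 1" "x n < \<eta>" using that N by auto
    have "x n powr (\<alpha> - 1) \<le> ((1 / (2 * B)) powr (1 / (\<alpha> - 1))) powr (\<alpha> - 1)"
      using x_in[of n] \<open>n \<ge> 1\<close> \<open>x n < \<eta>\<close> alpha_gt_1 unfolding \<eta>_def by (intro powr_mono2) auto
    also have "\<dots> = 1 / (2 * B)" using alpha_gt_1 AB by (simp add: powr_powr)
    finally have "2 * B * x n powr (\<alpha> - 1) \<le> 1" using AB by (simp add: field_simps)
    then show ?thesis
      using increment_bounds[OF AB(1) fb \<open>n \<ge> 1\<close>] \<open>x n < \<eta>\<close> unfolding y_def \<eta>_def by simp
  qed
  have "0 < (\<alpha> - 1) * A" using alpha_gt_1 AB by simp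
  moreover have "y n > 0" if "n \<ge> 1" for n using x_in[OF that] unfolding y_def by simp
  ultimately obtain L U where LU: "0 < L" "L \<le> U" "\<And>n. n \<ge> 1 \<Longrightarrow> L \<le> y n / real n \<and> y n / real n \<le> U"
    using linear_growth_of_bounded_increments[of y "Suc N", OF _ _ _ incr] by auto
  define e where "e = -1 / (\<alpha> - 1)"
  have "e < 0" "(1 - \<alpha>) * e = 1" unfolding e_def using alpha_gt_1 by (auto simp: field_simps)
  have x_eq: "x n = (y n / real n) powr e * real n powr e" if "n \<ge> 1" for n
    using x_in[OF that] that \<open>(1 - \<alpha>) * e = 1\<close> by (simp add: y_def powr_powr powr_divide)
  show ?thesis
  proof (rule that[of "U powr e" "L powr e"])
    show "0 < U powr e" using LU by simp
    show "U powr e \<le> L powr e" using LU \<open>e < 0\<close> by (intro powr_mono2') auto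
    fix n :: nat assume "n \<ge> 1"
    then have "U powr e \<le> (y n / real n) powr e" "(y n / real n) powr e \<le> L powr e"
      using LU(1) LU(3)[of n] \<open>e < 0\<close> by (auto intro!: powr_mono2')
    then show "U powr e * real n powr (-1 / (\<alpha> - 1)) \<le> x n \<and> x n \<le> L powr e * real n powr (-1 / (\<alpha> - 1))"
      using x_eq[OF \<open>n \<ge> 1\<close>] unfolding e_def[symmetric] by (auto intro: mult_right_mono)
  qed
qed

lemma x_simeq: "simeq_seq x (\<lambda>n. real n powr (-1 / (\<alpha> - 1)))"
proof -
  obtain a0 b0 where "0 < a0" "a0 \<le> b0"
    and bounds: "\<And>n. n \<ge> 1 \<Longrightarrow> a0 * real n powr (-1 / (\<alpha> - 1)) \<le> x n
                          \<and> x n \<le> b0 * real n powr (-1 / (\<alpha> - 1))"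
    using x_asymptotics by blast
  have "a0 \<le> x n / real n powr (-1 / (\<alpha> - 1)) \<and> x n / real n powr (-1 / (\<alpha> - 1)) \<le> b0"
    if "n \<ge> 1" for n
    using bounds[OF that] that by (simp add: pos_le_divide_eq pos_divide_le_eq)
  then show ?thesis
    unfolding simeq_seq_def using \<open>0 < a0\<close> \<open>a0 \<le> b0\<close> by blast
qed

lemma index_at_scale:
  assumes "0 < a0"
    and bounds: "\<And>n. n \<ge> 1 \<Longrightarrow> a0 * real n powr (-1 / (\<alpha> - 1)) \<le> x n
                          \<and> x n \<le> b0 * real n powr (-1 / (\<alpha> - 1))"
    and "0 < u" "u \<le> b0"
  obtains M where "M \<ge> 1" "x M \<le> u" "a0 * 2 powr (-1 / (\<alpha> - 1)) / b0 * u \<le> x M"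
    and "real M \<le> 2 * (u / b0) powr (1 - \<alpha>)"
proof -
  define e where "e = -1 / (\<alpha> - 1)"
  have "e < 0" "(1 - \<alpha>) * e = 1" unfolding e_def using alpha_gt_1 by (auto simp: field_simps)
  define T where "T = (u / b0) powr (1 - \<alpha>)"
  have "0 < b0" using \<open>0 < u\<close> \<open>u \<le> b0\<close> by simp
  have "1 powr (1 - \<alpha>) \<le> T"
    unfolding T_def using \<open>0 < u\<close> \<open>u \<le> b0\<close> alpha_gt_1 by (intro powr_mono2') auto
  then have "T \<ge> 1" by simp
  define M where "M = nat \<lceil>T\<rceil>"
  have M: "T \<le> real M" "real M \<le> 2 * T" "M \<ge> 1"
    unfolding M_def using \<open>T \<ge> 1\<close> by linarith+
  have "T powr e = u / b0"
    unfolding T_def using \<open>0 < u\<close> \<open>0 < b0\<close> \<open>(1 - \<alpha>) * e = 1\<close> by (simp add: powr_powr)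
  have "x M \<le> b0 * real M powr e" using bounds[OF \<open>M \<ge> 1\<close>] unfolding e_def by simp
  also have "\<dots> \<le> b0 * T powr e"
    using M \<open>T \<ge> 1\<close> \<open>e < 0\<close> \<open>0 < b0\<close> by (intro mult_left_mono powr_mono2') auto
  also have "\<dots> = u" using \<open>T powr e = u / b0\<close> \<open>0 < b0\<close> by simp
  finally have "x M \<le> u" .
  have "a0 * 2 powr e / b0 * u = a0 * (2 * T) powr e"
    using \<open>T powr e = u / b0\<close> \<open>0 < b0\<close> by (simp add: powr_mult)
  also have "\<dots> \<le> a0 * real M powr e"
    using M \<open>T \<ge> 1\<close> \<open>e < 0\<close> \<open>0 < a0\<close> by (intro mult_left_mono powr_mono2') auto
  also have "\<dots> \<le> x M" using bounds[OF \<open>M \<ge> 1\<close>] unfolding e_def by simp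
  finally have "a0 * 2 powr e / b0 * u \<le> x M" .
  then show ?thesis
    using that[OF \<open>M \<ge> 1\<close> \<open>x M \<le> u\<close>] M unfolding e_def T_def by simp
qed

text \<open>Upper bound \<open>|S\<^sub>\<epsilon>| \<lesssim> \<epsilon>\<^bsup>1/\<alpha>\<^esup>\<close>: cover with the first \<open>M \<simeq> \<epsilon>\<^bsup>(1-\<alpha>)/\<alpha>\<^esup>\<close> balls
  plus the tail, where \<open>x\<^sub>M \<le> \<epsilon>\<^bsup>1/\<alpha>\<^esup>\<close>.\<close>
lemma measure_nbhd_upper:
  obtains c where "\<forall>\<^sub>F \<epsilon> in at_right 0. measure lebesgue (nbhd (x ` {1..}) \<epsilon>) \<le> c * \<epsilon> powr (1 / \<alpha>)"
proof -
  obtain a0 b0 where "0 < a0" "a0 \<le> b0"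
    and bounds: "\<And>n. n \<ge> 1 \<Longrightarrow> a0 * real n powr (-1 / (\<alpha> - 1)) \<le> x n
                          \<and> x n \<le> b0 * real n powr (-1 / (\<alpha> - 1))"
    using x_asymptotics by blast
  have "0 < \<alpha>" using alpha_gt_1 by simp
  have "\<forall>\<^sub>F \<epsilon> in at_right 0. 0 < \<epsilon> \<and> \<epsilon> < b0 powr \<alpha>"
    unfolding eventually_at_right_field using \<open>0 < a0\<close> \<open>a0 \<le> b0\<close>
    by (intro exI[of _ "b0 powr \<alpha>"]) auto
  then have "\<forall>\<^sub>F \<epsilon> in at_right 0.
      measure lebesgue (nbhd (x ` {1..}) \<epsilon>) \<le> (1 + 4 * b0 powr (\<alpha> - 1)) * \<epsilon> powr (1 / \<alpha>)"
  proof eventually_elim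
    case (elim \<epsilon>)
    define u where "u = \<epsilon> powr (1 / \<alpha>)"
    have "0 < u" unfolding u_def using elim by simp
    have "u \<le> (b0 powr \<alpha>) powr (1 / \<alpha>)"
      unfolding u_def using elim \<open>0 < \<alpha>\<close> by (intro powr_mono2) auto
    also have "\<dots> = b0" using \<open>0 < a0\<close> \<open>a0 \<le> b0\<close> \<open>0 < \<alpha>\<close> by (simp add: powr_powr)
    finally obtain M where M: "M \<ge> 1" "x M \<le> u" "real M \<le> 2 * (u / b0) powr (1 - \<alpha>)"
      using index_at_scale[OF \<open>0 < a0\<close> bounds \<open>0 < u\<close>] by blast
    have "\<epsilon> * u powr (1 - \<alpha>) = \<epsilon> powr (1 + 1 / \<alpha> * (1 - \<alpha>))"
      unfolding u_def using elim by (simp add: powr_powr powr_mult_base)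
    also have "1 + 1 / \<alpha> * (1 - \<alpha>) = 1 / \<alpha>" using \<open>0 < \<alpha>\<close> by (simp add: field_simps)
    finally have eps_u: "\<epsilon> * u powr (1 - \<alpha>) = u" unfolding u_def .
    have "b0 powr (1 - \<alpha>) * b0 powr (\<alpha> - 1) = 1"
      using \<open>0 < a0\<close> \<open>a0 \<le> b0\<close> by (simp add: powr_add[symmetric])
    then have u_b0: "(u / b0) powr (1 - \<alpha>) = u powr (1 - \<alpha>) * b0 powr (\<alpha> - 1)"
      using \<open>0 < u\<close> \<open>0 < a0\<close> \<open>a0 \<le> b0\<close> by (simp add: powr_divide field_simps)
    have "measure lebesgue (nbhd (x ` {1..}) \<epsilon>) \<le> x M + 2 * \<epsilon> * real M"
      using measure_nbhd_range_le[OF \<open>M \<ge> 1\<close>] elim by simp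
    also have "\<dots> \<le> u + 2 * \<epsilon> * (2 * (u / b0) powr (1 - \<alpha>))"
      using M elim by (intro add_mono mult_left_mono) auto
    also have "\<dots> = (1 + 4 * b0 powr (\<alpha> - 1)) * u"
      unfolding u_b0 using eps_u by (simp add: algebra_simps)
    finally show ?case unfolding u_def .
  qed
  then show ?thesis by (rule that)
qed

text \<open>Lower bound \<open>|S\<^sub>\<epsilon>| \<gtrsim> \<epsilon>\<^bsup>1/\<alpha>\<^esup>\<close>: beyond an index \<open>M\<close> with \<open>x\<^sub>M \<simeq> (\<epsilon>/B)\<^bsup>1/\<alpha>\<^esup>\<close> all
  gaps \<open>f(x\<^sub>n) \<le> f(x\<^sub>M) \<le> \<epsilon>\<close> are small, so \<open>(0, x\<^sub>M)\<close> is covered.\<close>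
lemma measure_nbhd_lower:
  obtains c where "0 < c"
    and "\<forall>\<^sub>F \<epsilon> in at_right 0. c * \<epsilon> powr (1 / \<alpha>) \<le> measure lebesgue (nbhd (x ` {1..}) \<epsilon>)"
proof -
  obtain a0 b0 where "0 < a0" "a0 \<le> b0"
    and bounds: "\<And>n. n \<ge> 1 \<Longrightarrow> a0 * real n powr (-1 / (\<alpha> - 1)) \<le> x n
                          \<and> x n \<le> b0 * real n powr (-1 / (\<alpha> - 1))"
    using x_asymptotics by blast
  obtain A B \<delta> where "0 < A" "A \<le> B" "0 < \<delta>"
    and fb: "\<And>t. 0 < t \<Longrightarrow> t < \<delta> \<Longrightarrow> A * t powr \<alpha> \<le> f t \<and> f t \<le> B * t powr \<alpha>"
    using simeq_at0_powr_bounds[OF f_simeq] by blast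
  have "0 < \<alpha>" "0 < B" using alpha_gt_1 \<open>0 < A\<close> \<open>A \<le> B\<close> by auto
  define \<kappa> where "\<kappa> = a0 * 2 powr (-1 / (\<alpha> - 1)) / b0"
  have "0 < \<kappa>" unfolding \<kappa>_def using \<open>0 < a0\<close> \<open>a0 \<le> b0\<close> by simp
  define v where "v = min b0 (\<delta> / 2)"
  have "0 < v" unfolding v_def using \<open>0 < a0\<close> \<open>a0 \<le> b0\<close> \<open>0 < \<delta>\<close> by simp
  have "\<forall>\<^sub>F \<epsilon> in at_right 0. 0 < \<epsilon> \<and> \<epsilon> < B * v powr \<alpha>"
    unfolding eventually_at_right_field using \<open>0 < B\<close> \<open>0 < v\<close>
    by (intro exI[of _ "B * v powr \<alpha>"]) auto
  then have "\<forall>\<^sub>F \<epsilon> in at_right 0.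
      \<kappa> / B powr (1 / \<alpha>) * \<epsilon> powr (1 / \<alpha>) \<le> measure lebesgue (nbhd (x ` {1..}) \<epsilon>)"
  proof eventually_elim
    case (elim \<epsilon>)
    define u where "u = (\<epsilon> / B) powr (1 / \<alpha>)"
    have "0 < u" unfolding u_def using elim \<open>0 < B\<close> by simp
    have "u \<le> (v powr \<alpha>) powr (1 / \<alpha>)"
      unfolding u_def using elim \<open>0 < B\<close> \<open>0 < \<alpha>\<close> by (intro powr_mono2) (auto simp: field_simps)
    also have "\<dots> = v" using \<open>0 < v\<close> \<open>0 < \<alpha>\<close> by (simp add: powr_powr)
    finally have "u \<le> b0" "u < \<delta>" unfolding v_def using \<open>0 < \<delta>\<close> by auto
    then obtain M where M: "M \<ge> 1" "x M \<le> u" "\<kappa> * u \<le> x M"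
      using index_at_scale[OF \<open>0 < a0\<close> bounds \<open>0 < u\<close>] unfolding \<kappa>_def by blast
    have "0 < x M" using x_in[OF \<open>M \<ge> 1\<close>] by simp
    have "f (x M) \<le> B * x M powr \<alpha>" using fb \<open>0 < x M\<close> M \<open>u < \<delta>\<close> by simp
    also have "\<dots> \<le> B * u powr \<alpha>"
      using M \<open>0 < x M\<close> \<open>0 < B\<close> \<open>0 < \<alpha>\<close> by (intro mult_left_mono powr_mono2) auto
    also have "\<dots> = \<epsilon>" unfolding u_def using elim \<open>0 < B\<close> \<open>0 < \<alpha>\<close> by (simp add: powr_powr)
    finally have "f (x M) \<le> \<epsilon>" .
    have gaps: "x n - x (Suc n) < 2 * \<epsilon>" if "n \<ge> M" for n
      using gap_le[OF \<open>M \<ge> 1\<close> that] \<open>f (x M) \<le> \<epsilon>\<close> elim by simp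
    have "\<kappa> / B powr (1 / \<alpha>) * \<epsilon> powr (1 / \<alpha>) = \<kappa> * u"
      unfolding u_def using elim \<open>0 < B\<close> by (simp add: powr_divide)
    also have "\<dots> \<le> measure lebesgue (nbhd (x ` {1..}) \<epsilon>)"
      using M(3) measure_nbhd_range_ge[OF \<open>M \<ge> 1\<close> gaps] by simp
    finally show ?case .
  qed
  then show ?thesis using \<open>0 < \<kappa>\<close> \<open>0 < B\<close> by (intro that[of "\<kappa> / B powr (1 / \<alpha>)"]) auto
qed

end

theorem theorem1:
  fixes \<alpha> r x1 :: real and f :: "real \<Rightarrow> real" and x :: "nat \<Rightarrow> real"
  assumes "\<alpha> > 1" and "r > 0"
    and "mono_on {0<..<r} f"
    and "\<And>t. t \<in> {0<..<r} \<Longrightarrow> f t > 0"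
    and "simeq_at0 f (\<lambda>t. t powr \<alpha>)"
    and "\<And>t. t \<in> {0<..<r} \<Longrightarrow> f t < t"
    and "x1 \<in> {0<..<r}"
    and "x 1 = x1"
    and "\<And>n. n \<ge> 1 \<Longrightarrow> x (Suc n) = x n - f (x n)"
  shows "simeq_seq x (\<lambda>n. real n powr (-1 / (\<alpha> - 1)))
     \<and> has_box_dim (x ` {1..}) (1 - 1 / \<alpha>)
     \<and> mink_nondegenerate (x ` {1..})"
proof -
  interpret iteration \<alpha> r f x
    using assms by unfold_locales auto
  obtain c1 where "0 < c1"
    and lower: "\<forall>\<^sub>F \<epsilon> in at_right 0. c1 * \<epsilon> powr (1 / \<alpha>) \<le> measure lebesgue (nbhd (x ` {1..}) \<epsilon>)"
    using measure_nbhd_lower by blast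
  obtain c2
    where upper: "\<forall>\<^sub>F \<epsilon> in at_right 0. measure lebesgue (nbhd (x ` {1..}) \<epsilon>) \<le> c2 * \<epsilon> powr (1 / \<alpha>)"
    using measure_nbhd_upper by blast
  have "0 \<le> 1 - 1 / \<alpha>" "1 - (1 - 1 / \<alpha>) = 1 / \<alpha>"
    using \<open>\<alpha> > 1\<close> by auto
  then have "has_box_dim (x ` {1..}) (1 - 1 / \<alpha>) \<and> mink_nondegenerate (x ` {1..})"
    using box_dim_of_power_bounds[of "1 - 1 / \<alpha>" c1 "x ` {1..}" c2] \<open>0 < c1\<close> lower upper
    by simp
  with x_simeq show ?thesis by blast
qed

end
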